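(* Consider the system $x[k+1]=Ax[k]+Bu[k]+w[k]$, $y[k]=x[k]+v[k]$ in closed loop with the controller $x_K[k+1]=A_Kx_K[k]+B_Ky[k]$, $u[k]=C_Kx_K[k]+D_Ky[k]$ ($x\in\mathbb{R}^n$, $x_K\in\mathbb{R}^{n_K}$), with closed-loop matrices $$A_{CL}=\begin{bmatrix}A+BD_K & BC_K\\ B_K & A_K\end{bmatrix},\qquad B_{CL}=\begin{bmatrix}I_n & BD_K\\ O & B_K\end{bmatrix}.$$ Let $\eta\in(0,1)$, let $\widetilde H_I\in\mathbb{R}^{(n+n_K)\times(n+n_K)}$ with $\det(\widetilde H_I)\neq0$, and let $$\widetilde\Omega_I:=\{\xi\in\mathbb{R}^{n+n_K}:-1_{n+n_K}\le\widetilde H_I\xi\le 1_{n+n_K}\}.$$ Let $\varepsilon_s$ satisfy $\varepsilon_p+\varepsilon_m<\varepsilon_s<1$, and assume: C1) $A_{CL}\widetilde\Omega_I\oplus B_{CL}\mathcal{Z}\subseteq\eta\,\widetilde\Omega_I$; C2) $[I_n\ O]\,\widetilde\Omega_I\subseteq(\varepsilon_s-\varepsilon_p-\varepsilon_m)\,\mathcal{S}$. Then: (a) the set $\Omega_I:=[I_n\ O]\widetilde\Omega_I\oplus\mathcal{N}$ satisfies: I1) $\Omega_I\subseteq\varepsilon_s\mathcal{S}$; I2) $\{r\in\mathbb{R}^n:\|r\|\le\alpha\}\subseteq\Omega_I\ominus\mathcal{N}$ with $\alpha=1/\|\widetilde H_I\|$; I3) $\bigoplus_{i=0}^N[I_n\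 O]A_{CL}^iB_{CL}\mathcal{Z}\subseteq\beta(\Omega_I\ominus\mathcal{N})$ for all $N\in\mathbb{N}$, with $\beta=\eta$; (b) the matrix $A_{CL}$ is Schur.
   Context: Notation: $\oplus$ Minkowski sum, $\ominus$ Pontryagin difference ($\mathcal{X}\ominus\mathcal{Y}=\{x:x+y\in\mathcal{X}\ \forall y\in\mathcal{Y}\}$), $(-\mathcal{V})=\{-v:v\in\mathcal{V}\}$, $1_p$ the all-ones vector of dimension $p$, vector inequalities componentwise, $\|\cdot\|$ the Euclidean norm / induced matrix 2-norm, $[I_n\ O]$ the projection onto the first $n$ coordinates. Standing assumptions: $\mathcal{W},\mathcal{V},\mathcal{D},\mathcal{S},\mathcal{X}\subset\mathbb{R}^n$ are polytopes containing the origin in their interiors, $\mathcal{S}\subset\mathcal{X}$; $\varepsilon_p,\varepsilon_m\in(0,1)$ satisfy $\mathcal{V}\subseteq\varepsilon_p\mathcal{S}$ and $(-\mathcal{V})\subseteq\varepsilon_m\mathcal{S}$; some closed Euclidean ball of positive radius centered at $0$ lies in $\mathcal{S}$; $A\mathcal{S}\oplus\mathcal{W}\oplus\mathcal{D}\subseteq\mathcal{X}$. Define $\mathcal{Z}:=\mathcal{W}\times\mathcal{V}\subset\mathbb{R}^{2n}$ and $\mathcal{N}:=(-\mathcal{V})\oplus\mathcal{V}$. *)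

theory Defs
  imports "HOL-Analysis.Analysis"
begin

definition msum :: "'a::ab_group_add set \<Rightarrow> 'a set \<Rightarrow> 'a set" where
  "msum X Y = {x + y | x y. x \<in> X \<and> y \<in> Y}"

definition pdiff :: "'a::ab_group_add set \<Rightarrow> 'a set \<Rightarrow> 'a set" where
  "pdiff X Y = {x. \<forall>y\<in>Y. x + y \<in> X}"

fun bigmsum :: "(nat \<Rightarrow> 'a::ab_group_add set) \<Rightarrow> nat \<Rightarrow> 'a set" where
  "bigmsum F 0 = F 0"
| "bigmsum F (Suc N) = msum (bigmsum F N) (F (Suc N))"

fun matpow :: "('a::comm_ring_1)^'n^'n \<Rightarrow> nat \<Rightarrow> 'a^'n^'n" where
  "matpow M 0 = mat 1"
| "matpow M (Suc k) = M ** matpow M k"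

definition ACL :: "real^'n^'n \<Rightarrow> real^'u^'n \<Rightarrow> real^'k^'k \<Rightarrow> real^'n^'k
    \<Rightarrow> real^'k^'u \<Rightarrow> real^'n^'u \<Rightarrow> real^('n + 'k)^('n + 'k)" where
  "ACL A B AK BK CK DK = (\<chi> i j. case i of
       Inl a \<Rightarrow> (case j of Inl b \<Rightarrow> (A + B ** DK) $ a $ b | Inr b \<Rightarrow> (B ** CK) $ a $ b)
     | Inr a \<Rightarrow> (case j of Inl b \<Rightarrow> BK $ a $ b | Inr b \<Rightarrow> AK $ a $ b))"

text \<open>B_CL acts on z = (w, v) in R^(2n), indexed by 'n + 'n (Inl = w, Inr = v).\<close>
definition BCL :: "real^'u^'n \<Rightarrow> real^'n^'k \<Rightarrow> real^'n^'u \<Rightarrow> real^('n + 'n)^('n + 'k)" where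
  "BCL B BK DK = (\<chi> i j. case i of
       Inl a \<Rightarrow> (case j of Inl b \<Rightarrow> (mat 1 :: real^'n^'n) $ a $ b | Inr b \<Rightarrow> (B ** DK) $ a $ b)
     | Inr a \<Rightarrow> (case j of Inl b \<Rightarrow> 0 | Inr b \<Rightarrow> BK $ a $ b))"

text \<open>Z = W \<times> V as a subset of R^(2n).\<close>
definition Zset :: "(real^'n) set \<Rightarrow> (real^'n) set \<Rightarrow> (real^('n + 'n)) set" where
  "Zset W V = {z. (\<chi> i. z $ Inl i) \<in> W \<and> (\<chi> i. z $ Inr i) \<in> V}"

definition proj1 :: "real^('n + 'k::finite) \<Rightarrow> real^'n" where
  "proj1 \<xi> = (\<chi> i. \<xi> $ Inl i)"

definition OmegaT :: "real^'m^'m \<Rightarrow> (real^'m) set" where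
  "OmegaT H = {\<xi>. \<forall>i. -1 \<le> (H *v \<xi>) $ i \<and> (H *v \<xi>) $ i \<le> 1}"

definition schur :: "real^'m^'m \<Rightarrow> bool" where
  "schur M \<longleftrightarrow> (\<forall>(c::complex) (v::complex^'m). v \<noteq> 0 \<and>
      (\<chi> i j. complex_of_real (M $ i $ j)) *v v = c *s v \<longrightarrow> cmod c < 1)"

end

theory Submission
  imports Defs
begin

text \<open>Writing \<open>\<parallel>\<xi>\<parallel>\<^sub>H\<close> for \<open>infnorm (H \<xi>)\<close>, the polytope \<open>\<Omega>\<^sub>H\<close> is the unit ball of \<open>\<parallel>\<cdot>\<parallel>\<^sub>H\<close>, so C1
  with \<open>z = 0\<close> says that \<open>A\<^sub>C\<^sub>L\<close> contracts \<open>\<parallel>\<cdot>\<parallel>\<^sub>H\<close> by the factor \<open>\<eta>\<close>, which confines its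
  eigenvalues to the disc of radius \<open>\<eta>\<close>. Iterating C1, with \<open>\<eta> \<Omega>\<^sub>H \<subseteq> \<Omega>\<^sub>H\<close>, puts every partial sum
  \<open>\<Sum>\<^sub>i\<^sub>\<le>\<^sub>N A\<^sub>C\<^sub>L\<^sup>i B\<^sub>C\<^sub>L z\<^sub>i\<close> into \<open>\<eta> \<Omega>\<^sub>H\<close>; projecting gives I3 because \<open>P \<subseteq> (P \<oplus> N) \<ominus> N\<close>
  for all sets. I1 is convexity of \<open>\<S>\<close> (\<open>a \<S> \<oplus> b \<S> \<subseteq> (a + b) \<S>\<close>), and I2 holds because
  \<open>\<parallel>\<cdot>\<parallel>\<^sub>H \<le> \<parallel>H\<parallel> \<parallel>\<cdot>\<parallel>\<close>.\<close>

lemma msum_subset_scaleR_convex: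
  fixes S :: "'a::real_vector set"
  assumes "convex S" "0 \<le> a" "0 \<le> b"
    and "X \<subseteq> (\<lambda>s. a *\<^sub>R s) ` S" "Y \<subseteq> (\<lambda>s. b *\<^sub>R s) ` S"
  shows "msum X Y \<subseteq> (\<lambda>s. (a + b) *\<^sub>R s) ` S"
proof
  fix z assume "z \<in> msum X Y"
  then obtain s t where st: "s \<in> S" "t \<in> S" "z = a *\<^sub>R s + b *\<^sub>R t"
    using assms(4,5) unfolding msum_def by blast
  show "z \<in> (\<lambda>s. (a + b) *\<^sub>R s) ` S"
  proof (cases "a + b = 0")
    case True
    with assms(2,3) have "a = 0" "b = 0" by linarith+
    with st show ?thesis by (intro image_eqI[OF _ st(1)]) simp
  next
    case False
    then have pos: "0 < a + b" using assms(2,3) by linarith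
    define u where "u = (a / (a + b)) *\<^sub>R s + (b / (a + b)) *\<^sub>R t"
    have "u \<in> S"
      unfolding u_def using assms(1-3) st(1,2) pos
      by (intro convexD) (auto simp: add_divide_distrib[symmetric])
    moreover have "z = (a + b) *\<^sub>R u"
      using st(3) pos by (simp add: u_def scaleR_add_right)
    ultimately show ?thesis by blast
  qed
qed

lemma subset_pdiff_msum: "P \<subseteq> pdiff (msum P N) N"
  unfolding pdiff_def msum_def by blast

lemma subset_msum_if_zero_mem: "0 \<in> Y \<Longrightarrow> X \<subseteq> msum X Y"
  unfolding msum_def by force

lemma bigmsum_image_eq_sum:
  assumes "x \<in> bigmsum (\<lambda>i. g i ` Z) N"
  obtains z where "\<forall>i. z i \<in> Z" "x = (\<Sum>i\<le>N. g i (z i))"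
proof -
  from assms have "\<exists>z. (\<forall>i. z i \<in> Z) \<and> x = (\<Sum>i\<le>N. g i (z i))"
  proof (induction N arbitrary: x)
    case 0
    then obtain z0 where "z0 \<in> Z" "x = g 0 z0" by auto
    then show ?case by (intro exI[of _ "\<lambda>_. z0"]) auto
  next
    case (Suc N)
    then obtain a z' where a: "a \<in> bigmsum (\<lambda>i. g i ` Z) N" and "z' \<in> Z" "x = a + g (Suc N) z'"
      by (auto simp: msum_def)
    obtain z where "\<forall>i. z i \<in> Z" "a = (\<Sum>i\<le>N. g i (z i))" using Suc.IH[OF a] by blast
    moreover have "(\<Sum>i\<le>N. g i ((z(Suc N := z')) i)) = (\<Sum>i\<le>N. g i (z i))" by (intro sum.cong) auto
    ultimately show ?case using \<open>z' \<in> Z\<close> \<open>x = a + g (Suc N) z'\<close>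
      by (intro exI[of _ "z(Suc N := z')"]) auto
  qed
  then show ?thesis using that by blast
qed

lemma sum_matpow_mem_scaled_invariant:
  fixes M :: "real^'m^'m" and Bm :: "real^'z^'m"
  assumes inv: "msum ((\<lambda>\<xi>. M *v \<xi>) ` \<Omega>) ((\<lambda>z. Bm *v z) ` Z) \<subseteq> (\<lambda>\<xi>. \<eta> *\<^sub>R \<xi>) ` \<Omega>"
    and "0 \<in> \<Omega>" and shrink: "(\<lambda>\<xi>. \<eta> *\<^sub>R \<xi>) ` \<Omega> \<subseteq> \<Omega>"
    and "\<forall>i. z i \<in> Z"
  shows "(\<Sum>i\<le>N. matpow M i *v (Bm *v z i)) \<in> (\<lambda>\<xi>. \<eta> *\<^sub>R \<xi>) ` \<Omega>"
  using assms(4)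
proof (induction N arbitrary: z)
  case 0
  then have "M *v 0 + Bm *v z 0 \<in> msum ((\<lambda>\<xi>. M *v \<xi>) ` \<Omega>) ((\<lambda>z. Bm *v z) ` Z)"
    unfolding msum_def using \<open>0 \<in> \<Omega>\<close> by blast
  then show ?case using inv by auto
next
  case (Suc N)
  let ?tail = "\<Sum>i\<le>N. matpow M i *v (Bm *v z (Suc i))"
  have "?tail \<in> \<Omega>" using Suc.IH[of "z \<circ> Suc"] Suc.prems shrink by auto
  then have "M *v ?tail + Bm *v z 0 \<in> msum ((\<lambda>\<xi>. M *v \<xi>) ` \<Omega>) ((\<lambda>z. Bm *v z) ` Z)"
    unfolding msum_def using Suc.prems by blast
  moreover have "(\<Sum>i\<le>Suc N. matpow M i *v (Bm *v z i))
      = Bm *v z 0 + (\<Sum>i\<le>N. M *v (matpow M i *v (Bm *v z (Suc i))))"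
    unfolding sum.atMost_Suc_shift by (simp add: matrix_vector_mul_assoc matrix_mul_assoc)
  then have "(\<Sum>i\<le>Suc N. matpow M i *v (Bm *v z i)) = M *v ?tail + Bm *v z 0"
    by (simp add: linear_sum[OF matrix_vector_mul_linear] add.commute)
  ultimately show ?case using inv by auto
qed

lemma bigmsum_matpow_subset_scaled_invariant:
  fixes M :: "real^'m^'m" and Bm :: "real^'z^'m" and L :: "real^'m \<Rightarrow> 'a::real_vector"
  assumes "linear L"
    and "msum ((\<lambda>\<xi>. M *v \<xi>) ` \<Omega>) ((\<lambda>z. Bm *v z) ` Z) \<subseteq> (\<lambda>\<xi>. \<eta> *\<^sub>R \<xi>) ` \<Omega>"
    and "0 \<in> \<Omega>" and "(\<lambda>\<xi>. \<eta> *\<^sub>R \<xi>) ` \<Omega> \<subseteq> \<Omega>"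
  shows "bigmsum (\<lambda>i. (\<lambda>z. L (matpow M i *v (Bm *v z))) ` Z) N \<subseteq> (\<lambda>x. \<eta> *\<^sub>R x) ` L ` \<Omega>"
proof
  fix x assume "x \<in> bigmsum (\<lambda>i. (\<lambda>z. L (matpow M i *v (Bm *v z))) ` Z) N"
  then obtain z where z: "\<forall>i. z i \<in> Z" and x: "x = (\<Sum>i\<le>N. L (matpow M i *v (Bm *v z i)))"
    by (rule bigmsum_image_eq_sum)
  obtain \<xi> where "\<xi> \<in> \<Omega>" "(\<Sum>i\<le>N. matpow M i *v (Bm *v z i)) = \<eta> *\<^sub>R \<xi>"
    using sum_matpow_mem_scaled_invariant[OF assms(2-4) z] by blast
  then have "x = \<eta> *\<^sub>R L \<xi>"
    using x by (simp add: linear_sum[OF \<open>linear L\<close>, symmetric] linear_scale[OF \<open>linear L\<close>])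
  then show "x \<in> (\<lambda>x. \<eta> *\<^sub>R x) ` L ` \<Omega>" using \<open>\<xi> \<in> \<Omega>\<close> by blast
qed

lemma infnorm_le_iff_cart: "infnorm (x::real^'n) \<le> t \<longleftrightarrow> (\<forall>i. \<bar>x $ i\<bar> \<le> t)"
proof
  show "infnorm x \<le> t \<Longrightarrow> \<forall>i. \<bar>x $ i\<bar> \<le> t" using component_le_infnorm_cart order_trans by blast
  show "\<forall>i. \<bar>x $ i\<bar> \<le> t \<Longrightarrow> infnorm x \<le> t" unfolding infnorm_cart by (intro cSup_least) auto
qed

lemma OmegaT_eq_infnorm: "OmegaT H = {\<xi>. infnorm (H *v \<xi>) \<le> 1}"
  by (auto simp: OmegaT_def infnorm_le_iff_cart abs_le_iff)

lemma zero_mem_OmegaT: "0 \<in> OmegaT H"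
  by (simp add: OmegaT_def)

lemma scaleR_image_OmegaT_subset:
  assumes "\<bar>r\<bar> \<le> 1"
  shows "(\<lambda>\<xi>. r *\<^sub>R \<xi>) ` OmegaT H \<subseteq> OmegaT H"
  using assms mult_le_one[of "\<bar>r\<bar>"]
  by (auto simp: OmegaT_eq_infnorm matrix_vector_mult_scaleR infnorm_mul infnorm_pos_le)

lemma mem_OmegaT_if_norm_le:
  assumes "norm \<xi> \<le> 1 / onorm (\<lambda>x. H *v x)"
  shows "\<xi> \<in> OmegaT H"
proof -
  have "infnorm (H *v \<xi>) \<le> norm (H *v \<xi>)" by (rule infnorm_le_norm)
  also have "\<dots> \<le> onorm (\<lambda>x. H *v x) * norm \<xi>"
    by (rule onorm[OF matrix_vector_mul_bounded_linear])
  also have "\<dots> \<le> 1"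
    using assms onorm_pos_le[OF matrix_vector_mul_bounded_linear, of H]
    by (cases "onorm (\<lambda>x. H *v x) = 0") (auto simp: field_simps)
  finally show ?thesis by (simp add: OmegaT_eq_infnorm)
qed

lemma linear_proj1: "linear proj1"
  by (rule linearI) (simp_all add: proj1_def vec_eq_iff)

lemma proj1_lift_norm_eq:
  fixes r :: "real^'n"
  obtains \<xi> :: "real^('n + 'k::finite)" where "proj1 \<xi> = r" "norm \<xi> = norm r"
proof
  let ?\<xi> = "(\<chi> i. case i of Inl a \<Rightarrow> r $ a | Inr _ \<Rightarrow> 0) :: real^('n + 'k)"
  show "proj1 ?\<xi> = r" by (simp add: proj1_def vec_eq_iff)
  show "norm ?\<xi> = norm r"
    by (simp add: norm_vec_def L2_set_def UNIV_Plus_UNIV[symmetric] sum.Plus o_def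
        del: UNIV_Plus_UNIV)
qed

lemma norm_le_subset_proj1_OmegaT:
  fixes H :: "real^('n::finite + 'k::finite)^('n + 'k)"
  shows "{r. norm r \<le> 1 / onorm (\<lambda>x. H *v x)} \<subseteq> proj1 ` OmegaT H"
proof clarify
  fix r :: "real^'n" assume r: "norm r \<le> 1 / onorm (\<lambda>x. H *v x)"
  obtain \<xi> :: "real^('n + 'k)" where "proj1 \<xi> = r" "norm \<xi> = norm r" by (rule proj1_lift_norm_eq)
  then show "r \<in> proj1 ` OmegaT H" using mem_OmegaT_if_norm_le[of \<xi> H] r by force
qed

lemma zero_mem_Zset: "0 \<in> W \<Longrightarrow> 0 \<in> V \<Longrightarrow> 0 \<in> Zset W V"
  by (simp add: Zset_def zero_vec_def)

definition vec_Re :: "complex^'n \<Rightarrow> real^'n" where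
  "vec_Re w = (\<chi> j. Re (w $ j))"

lemma matrix_vector_mult_vec_Re:
  fixes M :: "real^'m^'n"
  shows "M *v vec_Re w = vec_Re ((\<chi> i j. complex_of_real (M $ i $ j)) *v w)"
  by (simp add: vec_eq_iff vec_Re_def matrix_vector_mult_def Re_sum)

lemma vec_Re_scaleR: "vec_Re (complex_of_real r *s w) = r *\<^sub>R vec_Re w"
  by (simp add: vec_eq_iff vec_Re_def)

lemma norm_vec_Re_le: "norm (vec_Re w) \<le> (\<Sum>j\<in>UNIV. cmod (w $ j))"
proof -
  have "norm (vec_Re w) \<le> (\<Sum>j\<in>UNIV. \<bar>vec_Re w $ j\<bar>)" by (rule norm_le_l1_cart)
  also have "\<dots> \<le> (\<Sum>j\<in>UNIV. cmod (w $ j))"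
    by (intro sum_mono) (simp add: vec_Re_def abs_Re_le_cmod)
  finally show ?thesis .
qed

lemma matrix_vector_mult_vec_Re_eigenvector:
  fixes M :: "real^'m^'m"
  assumes "(\<chi> i j. complex_of_real (M $ i $ j)) *v v = c *s v"
  shows "M *v vec_Re (u *s v) = vec_Re ((u * c) *s v)"
  using assms
  by (simp add: matrix_vector_mult_vec_Re vector_scalar_commute vector_smult_assoc mult.commute)

lemma exists_unimodular_vec_Re_nonzero:
  fixes v :: "complex^'m"
  assumes "v \<noteq> 0"
  obtains u where "cmod u = 1" "vec_Re (u *s v) \<noteq> 0"
proof -
  obtain j where "v $ j \<noteq> 0" using assms by (auto simp: vec_eq_iff)
  define u where "u = cnj (v $ j) / complex_of_real (cmod (v $ j))"
  have "cmod u = 1" using \<open>v $ j \<noteq> 0\<close> by (simp add: u_def norm_divide)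
  moreover have "u * v $ j = complex_of_real (cmod (v $ j))"
    using \<open>v $ j \<noteq> 0\<close> complex_norm_square[of "v $ j", symmetric]
    by (simp add: u_def power2_eq_square mult.commute)
  then have "vec_Re (u *s v) $ j = cmod (v $ j)"
    by (simp only: vec_Re_def vec_lambda_beta vector_smult_component Re_complex_of_real)
  then have "vec_Re (u *s v) \<noteq> 0" using \<open>v $ j \<noteq> 0\<close> by force
  ultimately show ?thesis using that by blast
qed

text \<open>If \<open>M v = c v\<close> with \<open>c \<noteq> 0\<close>, the real parts \<open>f u = Re (u v)\<close> of the rotated eigenvector satisfy
  \<open>M f u = f (u c)\<close>, so \<open>M\<close> stretches \<open>p\<close> on this family by exactly \<open>|c|\<close>. Comparing suprema of
  \<open>p \<circ> f\<close> over the unit circle yields \<open>|c| \<le> \<eta>\<close>.\<close>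

lemma schur_if_contracting_gauge:
  fixes M :: "real^'m^'m" and p :: "real^'m \<Rightarrow> real"
  assumes p_scale: "\<And>r x. 0 \<le> r \<Longrightarrow> p (r *\<^sub>R x) = r * p x"
    and p_pos: "\<And>x. x \<noteq> 0 \<Longrightarrow> 0 < p x"
    and p_bound: "\<And>x. p x \<le> K * norm x"
    and contr: "\<And>x. p (M *v x) \<le> \<eta> * p x"
    and "0 \<le> \<eta>" "\<eta> < 1"
  shows "schur M"
  unfolding schur_def
proof (intro allI impI, elim conjE)
  fix c :: complex and v :: "complex^'m"
  assume "v \<noteq> 0" and eig: "(\<chi> i j. complex_of_real (M $ i $ j)) *v v = c *s v"
  define f where "f u = vec_Re (u *s v)" for u
  define G where "G = {p (f u) | u. cmod u = 1}"
  have "bdd_above G"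
  proof (rule bdd_aboveI[of _ "\<bar>K\<bar> * (\<Sum>j\<in>UNIV. cmod (v $ j))"], unfold G_def, clarify)
    fix u :: complex assume "cmod u = 1"
    then have "norm (f u) \<le> (\<Sum>j\<in>UNIV. cmod (v $ j))"
      using norm_vec_Re_le[of "u *s v"] by (simp add: f_def norm_mult)
    then show "p (f u) \<le> \<bar>K\<bar> * (\<Sum>j\<in>UNIV. cmod (v $ j))"
      using p_bound[of "f u"] abs_ge_self[of K]
      by (meson abs_ge_zero mult_mono norm_ge_zero order_trans)
  qed
  then have upper: "p (f u) \<le> Sup G" if "cmod u = 1" for u
    using that by (auto intro!: cSup_upper simp: G_def)
  obtain u1 where "cmod u1 = 1" "f u1 \<noteq> 0"
    using exists_unimodular_vec_Re_nonzero[OF \<open>v \<noteq> 0\<close>] unfolding f_def by blast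
  then have "0 < Sup G" using p_pos upper by (meson less_le_trans)
  show "cmod c < 1"
  proof (cases "c = 0")
    case False
    have "cmod c * p (f u) \<le> \<eta> * Sup G" if "cmod u = 1" for u
    proof -
      define u0 where "u0 = u * complex_of_real (cmod c) / c"
      have "cmod u0 = 1" using that False by (simp add: u0_def norm_mult norm_divide)
      have "u0 * c = complex_of_real (cmod c) * u" using False by (simp add: u0_def)
      then have "M *v f u0 = cmod c *\<^sub>R f u"
        unfolding f_def matrix_vector_mult_vec_Re_eigenvector[OF eig]
        by (simp only: vector_smult_assoc[symmetric] vec_Re_scaleR)
      then have "cmod c * p (f u) = p (M *v f u0)" by (simp add: p_scale)
      also have "\<dots> \<le> \<eta> * p (f u0)" by (rule contr)
      also have "\<dots> \<le> \<eta> * Sup G" using upper[OF \<open>cmod u0 = 1\<close>] \<open>0 \<le> \<eta>\<close> by (rule mult_left_mono)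
      finally show ?thesis .
    qed
    then have "Sup G \<le> \<eta> * Sup G / cmod c"
      using False by (intro cSup_least) (auto simp: G_def field_simps intro: exI[of _ 1])
    then have "cmod c * Sup G \<le> \<eta> * Sup G" using False by (simp add: field_simps)
    then show ?thesis using \<open>0 < Sup G\<close> \<open>\<eta> < 1\<close> by simp
  qed simp
qed

lemma matrix_vector_mult_eq_0_iff_det_nz:
  fixes H :: "real^'m^'m"
  assumes "det H \<noteq> 0"
  shows "H *v x = 0 \<longleftrightarrow> x = 0"
proof -
  have "inj ((*v) H)" using assms invertible_det_nz inj_matrix_vector_mult by blast
  then show ?thesis by (metis injD matrix_vector_mult_0_right)
qed

lemma infnorm_contraction_if_OmegaT_invariant:
  fixes H M :: "real^'m^'m"
  assumes "det H \<noteq> 0" "0 \<le> \<eta>"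
    and inv: "(\<lambda>\<xi>. M *v \<xi>) ` OmegaT H \<subseteq> (\<lambda>\<xi>. \<eta> *\<^sub>R \<xi>) ` OmegaT H"
  shows "infnorm (H *v (M *v x)) \<le> \<eta> * infnorm (H *v x)"
proof (cases "x = 0")
  case False
  define t where "t = infnorm (H *v x)"
  have "H *v x \<noteq> 0" using False matrix_vector_mult_eq_0_iff_det_nz[OF assms(1)] by blast
  then have "0 < t" by (simp add: t_def infnorm_pos_lt)
  then have "(1 / t) *\<^sub>R x \<in> OmegaT H"
    by (simp add: OmegaT_eq_infnorm matrix_vector_mult_scaleR infnorm_mul t_def)
  then obtain \<zeta> where "\<zeta> \<in> OmegaT H" "M *v ((1 / t) *\<^sub>R x) = \<eta> *\<^sub>R \<zeta>" using inv by blast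
  moreover have "M *v x = t *\<^sub>R (M *v ((1 / t) *\<^sub>R x))"
    using \<open>0 < t\<close> by (simp add: matrix_vector_mult_scaleR)
  ultimately have "M *v x = (t * \<eta>) *\<^sub>R \<zeta>" and "infnorm (H *v \<zeta>) \<le> 1"
    by (auto simp: OmegaT_eq_infnorm)
  then show ?thesis
    using \<open>0 < t\<close> \<open>0 \<le> \<eta>\<close>
    by (simp add: matrix_vector_mult_scaleR infnorm_mul abs_mult t_def mult_left_le)
qed (simp add: infnorm_0)

lemma schur_if_OmegaT_invariant:
  fixes H M :: "real^'m^'m"
  assumes "det H \<noteq> 0" "0 \<le> \<eta>" "\<eta> < 1"
    and "(\<lambda>\<xi>. M *v \<xi>) ` OmegaT H \<subseteq> (\<lambda>\<xi>. \<eta> *\<^sub>R \<xi>) ` OmegaT H"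
  shows "schur M"
proof (rule schur_if_contracting_gauge[where p = "\<lambda>x. infnorm (H *v x)"])
  show "x \<noteq> 0 \<Longrightarrow> 0 < infnorm (H *v x)" for x
    using matrix_vector_mult_eq_0_iff_det_nz[OF assms(1)] by (simp add: infnorm_pos_lt)
  show "infnorm (H *v x) \<le> onorm ((*v) H) * norm x" for x
    using infnorm_le_norm onorm[OF matrix_vector_mul_bounded_linear] order_trans by blast
qed (use assms infnorm_contraction_if_OmegaT_invariant in
      \<open>auto simp: matrix_vector_mult_scaleR infnorm_mul\<close>)

theorem theorem2:
  fixes A :: "real^'n^'n" and B :: "real^'u^'n"
    and AK :: "real^'k^'k" and BK :: "real^'n^'k" and CK :: "real^'k^'u" and DK :: "real^'n^'u"
    and W V D S X :: "(real^'n) set"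
    and \<epsilon>p \<epsilon>m \<epsilon>s \<eta> :: real
    and HI :: "real^('n + 'k)^('n + 'k)"
  assumes polyW: "polytope W" and intW: "0 \<in> interior W"
    and polyV: "polytope V" and intV: "0 \<in> interior V"
    and polyD: "polytope D" and intD: "0 \<in> interior D"
    and polyS: "polytope S" and intS: "0 \<in> interior S"
    and polyX: "polytope X" and intX: "0 \<in> interior X"
    and SX: "S \<subseteq> X"
    and ep: "0 < \<epsilon>p" "\<epsilon>p < 1" and em: "0 < \<epsilon>m" "\<epsilon>m < 1"
    and Vp: "V \<subseteq> (\<lambda>s. \<epsilon>p *\<^sub>R s) ` S"
    and Vm: "uminus ` V \<subseteq> (\<lambda>s. \<epsilon>m *\<^sub>R s) ` S"
    and ballS: "\<exists>r>0. cball 0 r \<subseteq> S"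
    and inv: "msum (msum ((\<lambda>x. A *v x) ` S) W) D \<subseteq> X"
    and eta: "0 < \<eta>" "\<eta> < 1"
    and detH: "det HI \<noteq> 0"
    and es: "\<epsilon>p + \<epsilon>m < \<epsilon>s" "\<epsilon>s < 1"
    and C1: "msum ((\<lambda>\<xi>. ACL A B AK BK CK DK *v \<xi>) ` OmegaT HI)
                  ((\<lambda>z. BCL B BK DK *v z) ` Zset W V)
             \<subseteq> (\<lambda>\<xi>. \<eta> *\<^sub>R \<xi>) ` OmegaT HI"
    and C2: "proj1 ` OmegaT HI \<subseteq> (\<lambda>s. (\<epsilon>s - \<epsilon>p - \<epsilon>m) *\<^sub>R s) ` S"
  shows "(let \<Omega>I = msum (proj1 ` OmegaT HI) (msum (uminus ` V) V);
              Nset = msum (uminus ` V) V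
          in \<Omega>I \<subseteq> (\<lambda>s. \<epsilon>s *\<^sub>R s) ` S
           \<and> {r. norm r \<le> 1 / onorm (\<lambda>x. HI *v x)} \<subseteq> pdiff \<Omega>I Nset
           \<and> (\<forall>N. bigmsum (\<lambda>i. (\<lambda>z. proj1 (matpow (ACL A B AK BK CK DK) i *v (BCL B BK DK *v z)))
                                   ` Zset W V) N
                  \<subseteq> (\<lambda>x. \<eta> *\<^sub>R x) ` pdiff \<Omega>I Nset))
         \<and> schur (ACL A B AK BK CK DK)"
proof -
  let ?A = "ACL A B AK BK CK DK" and ?B = "BCL B BK DK" and ?O = "OmegaT HI"
  let ?P = "proj1 ` ?O" and ?N = "msum (uminus ` V) V"
  have "convex S" using polyS polytope_imp_convex by blast
  then have N: "?N \<subseteq> (\<lambda>s. (\<epsilon>m + \<epsilon>p) *\<^sub>R s) ` S"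
    using msum_subset_scaleR_convex[OF _ _ _ Vm Vp] ep em by simp
  have I1: "msum ?P ?N \<subseteq> (\<lambda>s. \<epsilon>s *\<^sub>R s) ` S"
    using msum_subset_scaleR_convex[OF \<open>convex S\<close> _ _ C2 N] ep em es by simp
  have I2: "{r. norm r \<le> 1 / onorm (\<lambda>x. HI *v x)} \<subseteq> pdiff (msum ?P ?N) ?N"
    using norm_le_subset_proj1_OmegaT subset_pdiff_msum by blast
  have "0 \<in> Zset W V" using intW intV interior_subset zero_mem_Zset by blast
  then have "(\<lambda>\<xi>. ?A *v \<xi>) ` ?O \<subseteq> msum ((\<lambda>\<xi>. ?A *v \<xi>) ` ?O) ((\<lambda>z. ?B *v z) ` Zset W V)"
    by (intro subset_msum_if_zero_mem) (metis image_eqI matrix_vector_mult_0_right)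
  then have "(\<lambda>\<xi>. ?A *v \<xi>) ` ?O \<subseteq> (\<lambda>\<xi>. \<eta> *\<^sub>R \<xi>) ` ?O" using C1 by (rule order_trans)
  then have schur: "schur ?A" using eta by (intro schur_if_OmegaT_invariant[OF detH]) auto
  have "(\<lambda>\<xi>. \<eta> *\<^sub>R \<xi>) ` ?O \<subseteq> ?O" using eta by (intro scaleR_image_OmegaT_subset) simp
  then have I3: "bigmsum (\<lambda>i. (\<lambda>z. proj1 (matpow ?A i *v (?B *v z))) ` Zset W V) N
      \<subseteq> (\<lambda>x. \<eta> *\<^sub>R x) ` pdiff (msum ?P ?N) ?N" for N
    by (rule order_trans[OF bigmsum_matpow_subset_scaled_invariant[OF linear_proj1 C1 zero_mem_OmegaT]
          image_mono[OF subset_pdiff_msum]])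
  show ?thesis unfolding Let_def using I1 I2 I3 schur by blast
qed

end
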